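(* Let $(a_n)_{n\ge0}$ be nonzero complex numbers with $|a_0|\ge|a_1|\ge\cdots$ and $\sum_n|a_n|^2<\infty$, and let $T$ be the weighted shift $Te_n=a_ne_{n+1}$. Let $H_1$ be the closed linear span of $\{e_n:n\ge1\}$. Then: (1) the map $\mathcal F:\mathcal A_T\to H_1$, $\mathcal F(S)=Se_0$, is a linear homeomorphism onto $H_1$, and $\mathcal J\mapsto\mathcal F(\mathcal J)$ is a lattice isomorphism from the lattice of closed ideals of $\mathcal A_T$ onto the lattice of closed $T$-invariant subspaces of $H_1$; (2) the map $\tilde{\mathcal F}:\tilde{\mathcal A}_T\to H$, $\tilde{\mathcal F}(S)=Se_0$, is a linear homeomorphism onto $H$, and $\mathcal J\mapsto\tilde{\mathcal F}(\mathcal J)$ is a lattice isomorphism from the lattice of closed ideals of $\tilde{\mathcal A}_T$ onto the lattice of closed $T$-invariant subspaces of $H$.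
   Context: $H$ is a complex Hilbert space with orthonormal basis $\{e_n\}_{n\ge0}$, $Te_n=a_ne_{n+1}$, $\mathcal A_T$ is the operator-norm closure in $\mathcal B(H)$ of the polynomials $p(T)$ with $p(0)=0$, and $\tilde{\mathcal A}_T=\mathcal A_T+\mathbb C I$ is its unitization inside $\mathcal B(H)$ (the norm closure of all polynomials in $T$). *)

theory Defs
  imports "HOL-Analysis.Analysis"
begin

text \<open>The Hilbert space H is modelled concretely as l2(N) of complex sequences,
  with orthonormal basis e_n = indicator of n.  Bounded operators are functions on
  sequences that vanish off l2 (so that equality of operators is equality of functions).\<close>

type_synonym vec = "nat \<Rightarrow> complex"
type_synonym op = "vec \<Rightarrow> vec"

definition l2 :: "vec set" where
  "l2 = {x. summable (\<lambda>n. (cmod (x n))\<^sup>2)}"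

definition l2norm :: "vec \<Rightarrow> real" where
  "l2norm x = sqrt (\<Sum>n. (cmod (x n))\<^sup>2)"

definition zvec :: vec where "zvec = (\<lambda>_. 0)"

definition vadd :: "vec \<Rightarrow> vec \<Rightarrow> vec" where "vadd x y = (\<lambda>n. x n + y n)"
definition vsub :: "vec \<Rightarrow> vec \<Rightarrow> vec" where "vsub x y = (\<lambda>n. x n - y n)"
definition vscale :: "complex \<Rightarrow> vec \<Rightarrow> vec" where "vscale c x = (\<lambda>n. c * x n)"

definition basis_vec :: "nat \<Rightarrow> vec" where
  "basis_vec m = (\<lambda>k. if k = m then 1 else 0)"

definition is_bop :: "op \<Rightarrow> bool" where
  "is_bop S \<longleftrightarrow>
     (\<forall>x. x \<notin> l2 \<longrightarrow> S x = zvec) \<and>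
     (\<forall>x\<in>l2. S x \<in> l2) \<and>
     (\<forall>x\<in>l2. \<forall>y\<in>l2. S (vadd x y) = vadd (S x) (S y)) \<and>
     (\<forall>c. \<forall>x\<in>l2. S (vscale c x) = vscale c (S x)) \<and>
     (\<exists>C. \<forall>x\<in>l2. l2norm (S x) \<le> C * l2norm x)"

definition opnorm :: "op \<Rightarrow> real" where
  "opnorm S = Sup ((\<lambda>x. l2norm (S x)) ` {x \<in> l2. l2norm x \<le> 1})"

definition zop :: op where "zop = (\<lambda>x. zvec)"
definition opadd :: "op \<Rightarrow> op \<Rightarrow> op" where "opadd S R = (\<lambda>x. vadd (S x) (R x))"
definition opsub :: "op \<Rightarrow> op \<Rightarrow> op" where "opsub S R = (\<lambda>x. vsub (S x) (R x))"
definition opscale :: "complex \<Rightarrow> op \<Rightarrow> op" where "opscale c S = (\<lambda>x. vscale c (S x))"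

definition wshift :: "(nat \<Rightarrow> complex) \<Rightarrow> op" where
  "wshift a = (\<lambda>x. if x \<in> l2 then (\<lambda>k. if k = 0 then 0 else a (k - 1) * x (k - 1)) else zvec)"

definition polyT :: "(nat \<Rightarrow> complex) \<Rightarrow> (nat \<Rightarrow> complex) \<Rightarrow> nat \<Rightarrow> op" where
  "polyT a c n = (\<lambda>x. if x \<in> l2 then (\<lambda>j. \<Sum>k\<le>n. c k * ((wshift a ^^ k) x) j) else zvec)"

definition A_T :: "(nat \<Rightarrow> complex) \<Rightarrow> op set" where
  "A_T a = {S. is_bop S \<and>
     (\<forall>\<epsilon>>0. \<exists>c n. c 0 = 0 \<and> opnorm (opsub S (polyT a c n)) < \<epsilon>)}"

definition A_T_tilde :: "(nat \<Rightarrow> complex) \<Rightarrow> op set" where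
  "A_T_tilde a = {S. is_bop S \<and>
     (\<forall>\<epsilon>>0. \<exists>c n. opnorm (opsub S (polyT a c n)) < \<epsilon>)}"

definition H1 :: "vec set" where
  "H1 = {x \<in> l2. \<forall>\<epsilon>>0. \<exists>n c. l2norm (vsub x (\<lambda>j. \<Sum>k\<in>{1..n}. c k * basis_vec k j)) < \<epsilon>}"

definition closed_ideals :: "op set \<Rightarrow> op set set" where
  "closed_ideals A = {J. J \<subseteq> A \<and> zop \<in> J \<and>
     (\<forall>S\<in>J. \<forall>R\<in>J. opadd S R \<in> J) \<and>
     (\<forall>c. \<forall>S\<in>J. opscale c S \<in> J) \<and>
     (\<forall>S\<in>J. \<forall>R\<in>A. R \<circ> S \<in> J \<and> S \<circ> R \<in> J) \<and>
     (\<forall>S\<in>A. (\<forall>\<epsilon>>0. \<exists>R\<in>J. opnorm (opsub S R) < \<epsilon>) \<longrightarrow> S \<in> J)}"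

definition closed_inv_subspaces :: "op \<Rightarrow> vec set \<Rightarrow> vec set set" where
  "closed_inv_subspaces T K = {M. M \<subseteq> K \<and> zvec \<in> M \<and>
     (\<forall>x\<in>M. \<forall>y\<in>M. vadd x y \<in> M) \<and>
     (\<forall>c. \<forall>x\<in>M. vscale c x \<in> M) \<and>
     (\<forall>x\<in>M. T x \<in> M) \<and>
     (\<forall>x\<in>l2. (\<forall>\<epsilon>>0. \<exists>y\<in>M. l2norm (vsub x y) < \<epsilon>) \<longrightarrow> x \<in> M)}"

definition linear_homeo :: "(op \<Rightarrow> vec) \<Rightarrow> op set \<Rightarrow> vec set \<Rightarrow> bool" where
  "linear_homeo F A K \<longleftrightarrow>
     (\<forall>S\<in>A. \<forall>R\<in>A. F (opadd S R) = vadd (F S) (F R)) \<and>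
     (\<forall>c. \<forall>S\<in>A. F (opscale c S) = vscale c (F S)) \<and>
     bij_betw F A K \<and>
     (\<forall>S\<in>A. \<forall>\<epsilon>>0. \<exists>\<delta>>0. \<forall>R\<in>A. opnorm (opsub R S) < \<delta> \<longrightarrow> l2norm (vsub (F R) (F S)) < \<epsilon>) \<and>
     (\<forall>S\<in>A. \<forall>\<epsilon>>0. \<exists>\<delta>>0. \<forall>R\<in>A. l2norm (vsub (F R) (F S)) < \<delta> \<longrightarrow> opnorm (opsub R S) < \<epsilon>)"

text \<open>Phi is a lattice (= order) isomorphism from the lattice L1 onto L2 (both ordered by inclusion)\<close>
definition lattice_iso :: "('a set \<Rightarrow> 'b set) \<Rightarrow> 'a set set \<Rightarrow> 'b set set \<Rightarrow> bool" where
  "lattice_iso Phi L1 L2 \<longleftrightarrow> bij_betw Phi L1 L2 \<and>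
     (\<forall>J1\<in>L1. \<forall>J2\<in>L1. J1 \<subseteq> J2 \<longleftrightarrow> Phi J1 \<subseteq> Phi J2)"

end

theory Submission
  imports Defs "HOL-Computational_Algebra.Formal_Power_Series"
begin

text \<open>Identify x in l2 with the formal power series sum (x n / beta n) z^n, where
  beta n = a 0 * ... * a (n - 1).  Then T e_n = a_n e_(n+1) becomes multiplication by z, so a
  polynomial p(T) acts as multiplication by p.  Pulled back to l2, the product of power series is a
  convolution with coefficients beta m / (beta i * beta (m - i)); as |a n| decreases, these are 1 at
  the two ends and at most |a (m div 2)| / |a 0| in between, and m |a m|^2 <= sum |a n|^2, so by
  Cauchy-Schwarz the product is bounded: |x * y| <= C |x| |y|.  Hence the multiplication operators
  M_x (x in l2) satisfy |x| = |M_x e_0| <= |M_x| <= C |x|, and the norm closure of all polynomials in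
  T consists exactly of the M_x with x in l2 (of those without constant term: x in H_1), with
  S |-> S e_0 inverting x |-> M_x.  Closed ideals then correspond to closed subspaces stable under
  multiplication by all of l2, and for closed subspaces this is the same as T-invariance, because
  multiplication by x is a norm limit of polynomials in T.\<close>

lemma mult_less_if_less_divide:
  fixes C t e :: real
  assumes "0 \<le> C" "0 \<le> t" "t < e / (C + 1)"
  shows "C * t < e"
proof -
  have "C * t \<le> (C + 1) * t" using assms by (simp add: mult_right_mono)
  also have "\<dots> < e" using assms by (simp add: field_simps)
  finally show ?thesis .
qed

section \<open>Square-summable sequences\<close>

lemma l2norm_nonneg: "x \<in> l2 \<Longrightarrow> 0 \<le> l2norm x"
  by (simp add: l2norm_def l2_def suminf_nonneg)

lemma l2norm_sq: "x \<in> l2 \<Longrightarrow> (l2norm x)\<^sup>2 = (\<Sum>n. (cmod (x n))\<^sup>2)"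
  by (simp add: l2norm_def l2_def suminf_nonneg)

lemma l2_coord_le_l2norm:
  assumes "x \<in> l2" shows "cmod (x m) \<le> l2norm x"
proof -
  have "(\<Sum>n\<in>{m}. (cmod (x n))\<^sup>2) \<le> (\<Sum>n. (cmod (x n))\<^sup>2)"
    by (rule sum_le_suminf) (use assms in \<open>auto simp: l2_def\<close>)
  then have "(cmod (x m))\<^sup>2 \<le> (\<Sum>n. (cmod (x n))\<^sup>2)" by simp
  then have "sqrt ((cmod (x m))\<^sup>2) \<le> l2norm x"
    unfolding l2norm_def using real_sqrt_le_mono by blast
  then show ?thesis by simp
qed

lemma L2_set_le_l2norm:
  assumes "x \<in> l2" shows "L2_set (\<lambda>n. cmod (x n)) {..<N} \<le> l2norm x"
proof -
  have "(\<Sum>n<N. (cmod (x n))\<^sup>2) \<le> (\<Sum>n. (cmod (x n))\<^sup>2)"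
    by (rule sum_le_suminf) (use assms in \<open>auto simp: l2_def\<close>)
  then show ?thesis unfolding L2_set_def l2norm_def using real_sqrt_le_mono by blast
qed

lemma l2norm_le_if_partial_sums_le:
  assumes "x \<in> l2" "\<And>N. (\<Sum>n<N. (cmod (x n))\<^sup>2) \<le> B\<^sup>2" "0 \<le> B"
  shows "l2norm x \<le> B"
proof -
  have "(\<Sum>n. (cmod (x n))\<^sup>2) \<le> B\<^sup>2"
    by (rule suminf_le_const) (use assms in \<open>auto simp: l2_def\<close>)
  then have "l2norm x \<le> sqrt (B\<^sup>2)" unfolding l2norm_def using real_sqrt_le_mono by blast
  then show ?thesis using assms by simp
qed

lemma l2_vadd: assumes "x \<in> l2" "y \<in> l2" shows "vadd x y \<in> l2"
proof -
  have "(cmod (x n + y n))\<^sup>2 \<le> 2 * (cmod (x n))\<^sup>2 + 2 * (cmod (y n))\<^sup>2" for n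
  proof -
    have "(cmod (x n + y n))\<^sup>2 \<le> (cmod (x n) + cmod (y n))\<^sup>2"
      by (simp add: power_mono norm_triangle_ineq)
    also have "\<dots> \<le> 2 * (cmod (x n))\<^sup>2 + 2 * (cmod (y n))\<^sup>2"
      by (smt (verit) sum_squares_bound zero_le_power2 power2_sum)
    finally show ?thesis .
  qed
  moreover have "summable (\<lambda>n. 2 * (cmod (x n))\<^sup>2 + 2 * (cmod (y n))\<^sup>2)"
    using assms by (intro summable_add summable_mult) (auto simp: l2_def)
  ultimately show ?thesis
    unfolding l2_def vadd_def by (auto intro: summable_comparison_test')
qed

lemma l2norm_vadd_le:
  assumes "x \<in> l2" "y \<in> l2" shows "l2norm (vadd x y) \<le> l2norm x + l2norm y"
proof (rule l2norm_le_if_partial_sums_le[OF l2_vadd[OF assms]])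
  fix N
  have "L2_set (\<lambda>n. cmod (vadd x y n)) {..<N} \<le> L2_set (\<lambda>n. cmod (x n) + cmod (y n)) {..<N}"
    by (rule L2_set_mono) (auto simp: vadd_def norm_triangle_ineq)
  also have "\<dots> \<le> L2_set (\<lambda>n. cmod (x n)) {..<N} + L2_set (\<lambda>n. cmod (y n)) {..<N}"
    by (rule L2_set_triangle_ineq)
  also have "\<dots> \<le> l2norm x + l2norm y"
    using L2_set_le_l2norm[OF assms(1)] L2_set_le_l2norm[OF assms(2)] by (rule add_mono)
  finally have "sqrt (\<Sum>n<N. (cmod (vadd x y n))\<^sup>2) \<le> l2norm x + l2norm y"
    unfolding L2_set_def by simp
  then have "(sqrt (\<Sum>n<N. (cmod (vadd x y n))\<^sup>2))\<^sup>2 \<le> (l2norm x + l2norm y)\<^sup>2"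
    by (rule power_mono) (auto intro: sum_nonneg)
  then show "(\<Sum>n<N. (cmod (vadd x y n))\<^sup>2) \<le> (l2norm x + l2norm y)\<^sup>2"
    by (simp add: sum_nonneg)
qed (simp add: l2norm_nonneg assms)

lemma l2_vscale: "x \<in> l2 \<Longrightarrow> vscale c x \<in> l2"
  unfolding l2_def vscale_def by (simp add: norm_mult power_mult_distrib summable_mult)

lemma l2norm_vscale:
  assumes "x \<in> l2" shows "l2norm (vscale c x) = cmod c * l2norm x"
proof -
  have "(\<Sum>n. (cmod (vscale c x n))\<^sup>2) = (cmod c)\<^sup>2 * (\<Sum>n. (cmod (x n))\<^sup>2)"
    unfolding vscale_def using assms by (simp add: norm_mult power_mult_distrib suminf_mult l2_def)
  then show ?thesis unfolding l2norm_def by (simp add: real_sqrt_mult)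
qed

lemma vsub_eq_vadd_vscale: "vsub x y = vadd x (vscale (-1) y)"
  by (simp add: vsub_def vadd_def vscale_def)

lemma l2_vsub: "x \<in> l2 \<Longrightarrow> y \<in> l2 \<Longrightarrow> vsub x y \<in> l2"
  by (simp add: vsub_eq_vadd_vscale l2_vadd l2_vscale)

lemma l2norm_vsub_le:
  assumes "x \<in> l2" "y \<in> l2" shows "l2norm (vsub x y) \<le> l2norm x + l2norm y"
  using l2norm_vadd_le[OF assms(1) l2_vscale[OF assms(2)], of "-1"] l2norm_vscale[OF assms(2), of "-1"]
  by (simp add: vsub_eq_vadd_vscale)

lemma zvec_l2 [simp]: "zvec \<in> l2"
  by (simp add: l2_def zvec_def)

lemma l2norm_zvec [simp]: "l2norm zvec = 0"
  by (simp add: l2norm_def zvec_def)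

lemma vector_ops_zvec [simp]:
  "vadd zvec zvec = zvec" "vsub zvec zvec = zvec" "vscale c zvec = zvec"
  by (simp_all add: vadd_def vsub_def vscale_def zvec_def)

lemma l2norm_eq_zero: "x \<in> l2 \<Longrightarrow> l2norm x = 0 \<Longrightarrow> x = zvec"
  using l2_coord_le_l2norm by (fastforce simp: zvec_def)

lemma finite_support_l2:
  assumes "\<And>n. N < n \<Longrightarrow> x n = 0" shows "x \<in> l2"
proof -
  have "summable (\<lambda>n. (cmod (x n))\<^sup>2)"
    by (rule summable_finite[of "{..N}"]) (use assms in \<open>auto simp: not_le\<close>)
  then show ?thesis by (simp add: l2_def)
qed

lemma basis_vec_l2 [simp]: "basis_vec m \<in> l2"
  by (rule finite_support_l2[of m]) (simp add: basis_vec_def)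

lemma l2norm_basis_vec [simp]: "l2norm (basis_vec m) = 1"
proof -
  have "(\<Sum>n. (cmod (basis_vec m n))\<^sup>2) = (\<Sum>n\<in>{m}. (cmod (basis_vec m n))\<^sup>2)"
    by (rule suminf_finite) (auto simp: basis_vec_def)
  then show ?thesis by (simp add: l2norm_def basis_vec_def)
qed

lemma l2_coord_eq_zero_if_approx:
  assumes "x \<in> l2" "\<And>e. e > 0 \<Longrightarrow> \<exists>y\<in>l2. y m = 0 \<and> l2norm (vsub x y) < e"
  shows "x m = 0"
proof -
  have "cmod (x m) \<le> 0 + e" if "e > 0" for e
  proof -
    obtain y where "y \<in> l2" "y m = 0" "l2norm (vsub x y) < e" using assms(2) \<open>e > 0\<close> by blast
    then show ?thesis
      using l2_coord_le_l2norm[OF l2_vsub[OF assms(1)], of y m] by (simp add: vsub_def)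
  qed
  then have "cmod (x m) \<le> 0" by (rule field_le_epsilon)
  then show ?thesis by simp
qed

definition trunc :: "vec \<Rightarrow> nat \<Rightarrow> vec" where
  "trunc x N = (\<lambda>n. if n \<le> N then x n else 0)"

lemma trunc_l2: "trunc x N \<in> l2"
  by (rule finite_support_l2[of N]) (simp add: trunc_def)

lemma l2norm_tail_small:
  assumes "x \<in> l2" "e > 0"
  obtains N where "l2norm (vsub x (trunc x N)) < e"
proof -
  let ?f = "\<lambda>n. (cmod (x n))\<^sup>2"
  have sf: "summable ?f" using assms by (simp add: l2_def)
  obtain N where N: "\<forall>n\<ge>N. norm (\<Sum>i. ?f (i + n)) < e\<^sup>2"
    using suminf_exist_split[OF _ sf, of "e\<^sup>2"] assms by auto
  have "(\<lambda>i. (cmod (vsub x (trunc x N) i))\<^sup>2) = (\<lambda>i. if i \<le> N then 0 else ?f i)"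
    by (auto simp: vsub_def trunc_def)
  moreover have "(\<Sum>i. (if i \<le> N then 0 else ?f i)) = (\<Sum>i. ?f (i + Suc N))"
    using suminf_split_initial_segment[of "\<lambda>i. if i \<le> N then 0 else ?f i" "Suc N"]
      summable_iff_shift[of ?f "Suc N"] summable_iff_shift[of "\<lambda>i. if i \<le> N then 0 else ?f i" "Suc N"] sf
    by simp
  moreover have "(\<Sum>i. ?f (i + Suc N)) < e\<^sup>2" using N[rule_format, of "Suc N"] by simp
  ultimately have "(\<Sum>i. (cmod (vsub x (trunc x N) i))\<^sup>2) < e\<^sup>2" by simp
  then have "l2norm (vsub x (trunc x N)) < sqrt (e\<^sup>2)"
    unfolding l2norm_def using real_sqrt_less_mono by blast
  then show ?thesis using assms that by simp
qed

lemma H1_eq: "H1 = {x \<in> l2. x 0 = 0}"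
proof (intro set_eqI iffI)
  fix x assume x: "x \<in> H1"
  then have xl: "x \<in> l2" by (simp add: H1_def)
  have approx: "\<exists>y\<in>l2. y 0 = 0 \<and> l2norm (vsub x y) < e" if "e > 0" for e
  proof -
    obtain n c where close: "l2norm (vsub x (\<lambda>j. \<Sum>k\<in>{1..n}. c k * basis_vec k j)) < e"
      using x \<open>e > 0\<close> by (auto simp: H1_def)
    define y where "y = (\<lambda>j. \<Sum>k\<in>{1..n}. c k * basis_vec k j)"
    have "y \<in> l2"
      unfolding y_def by (rule finite_support_l2[of n]) (auto simp: basis_vec_def intro!: sum.neutral)
    moreover have "y 0 = 0"
      by (auto simp: y_def basis_vec_def intro!: sum.neutral)
    ultimately show ?thesis using close unfolding y_def[symmetric] by blast
  qed
  then show "x \<in> {x \<in> l2. x 0 = 0}" using l2_coord_eq_zero_if_approx[OF xl approx] xl by blast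
next
  fix x assume x: "x \<in> {x \<in> l2. x 0 = 0}"
  have "\<exists>n c. l2norm (vsub x (\<lambda>j. \<Sum>k\<in>{1..n}. c k * basis_vec k j)) < e" if "e > 0" for e
  proof -
    obtain N where N: "l2norm (vsub x (trunc x N)) < e" using l2norm_tail_small x \<open>e > 0\<close> by blast
    have "(\<lambda>j. \<Sum>k\<in>{1..N}. x k * basis_vec k j) = trunc x N"
    proof
      fix j
      have "(\<Sum>k\<in>{1..N}. x k * basis_vec k j) = (\<Sum>k\<in>{1..N}. if k = j then x j else 0)"
        by (intro sum.cong) (auto simp: basis_vec_def)
      also have "\<dots> = trunc x N j" using x by (cases "j = 0") (auto simp: trunc_def sum.delta')
      finally show "(\<Sum>k\<in>{1..N}. x k * basis_vec k j) = trunc x N j" .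
    qed
    then show ?thesis using N by (intro exI[of _ N] exI[of _ x]) simp
  qed
  then show "x \<in> H1" using x by (simp add: H1_def)
qed

lemma H1_closed:
  assumes "x \<in> l2" "\<forall>e>0. \<exists>y\<in>H1. l2norm (vsub x y) < e"
  shows "x \<in> H1"
  using assms l2_coord_eq_zero_if_approx[of x 0] by (auto simp: H1_eq)

section \<open>Bounded operators\<close>

lemma opnorm_le:
  assumes "\<And>x. x \<in> l2 \<Longrightarrow> l2norm x \<le> 1 \<Longrightarrow> l2norm (S x) \<le> C"
  shows "opnorm S \<le> C"
  unfolding opnorm_def
proof (rule cSup_least)
  have "zvec \<in> {x \<in> l2. l2norm x \<le> 1}" by simp
  then show "(\<lambda>x. l2norm (S x)) ` {x \<in> l2. l2norm x \<le> 1} \<noteq> {}" by blast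
qed (use assms in auto)

lemma bop_zvec:
  assumes "is_bop S" shows "S zvec = zvec"
proof -
  have "S (vscale 0 zvec) = vscale 0 (S zvec)" using assms zvec_l2 unfolding is_bop_def by blast
  then show ?thesis by (simp add: vscale_def zvec_def)
qed

lemma l2norm_bop_le:
  assumes "is_bop S" "x \<in> l2" shows "l2norm (S x) \<le> opnorm S * l2norm x"
proof -
  from assms(1) obtain C where C: "\<And>x. x \<in> l2 \<Longrightarrow> l2norm (S x) \<le> C * l2norm x"
    unfolding is_bop_def by blast
  have bdd: "bdd_above ((\<lambda>x. l2norm (S x)) ` {x \<in> l2. l2norm x \<le> 1})"
  proof (rule bdd_aboveI2)
    fix x assume x: "x \<in> {x \<in> l2. l2norm x \<le> 1}"
    then have "C * l2norm x \<le> max C 0"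
      using l2norm_nonneg[of x] by (cases "C \<ge> 0") (auto intro: mult_left_le simp: mult_nonpos_nonneg)
    then show "l2norm (S x) \<le> max C 0" using C x by force
  qed
  show ?thesis
  proof (cases "l2norm x = 0")
    case True
    then show ?thesis using l2norm_eq_zero bop_zvec assms by force
  next
    case False
    define t where "t = l2norm x"
    have t: "t > 0" using False l2norm_nonneg[OF assms(2)] by (simp add: t_def)
    define u where "u = vscale (of_real (1/t)) x"
    have u: "u \<in> l2" "l2norm u = 1"
      using t assms(2) by (simp_all add: u_def l2_vscale l2norm_vscale t_def norm_divide)
    have Su: "S u = vscale (of_real (1/t)) (S x)" using assms by (simp add: u_def is_bop_def)
    have "l2norm (S u) \<le> opnorm S" unfolding opnorm_def
      by (rule cSup_upper[OF _ bdd]) (use u in auto)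
    then have "(1/t) * l2norm (S x) \<le> opnorm S"
      using Su l2norm_vscale[of "S x"] assms t by (simp add: is_bop_def norm_divide)
    then show ?thesis using t by (simp add: t_def field_simps mult.commute)
  qed
qed

lemma opnorm_nonneg: "is_bop S \<Longrightarrow> 0 \<le> opnorm S"
  using l2norm_bop_le[of S "basis_vec 0"] l2norm_nonneg[of "S (basis_vec 0)"]
  by (simp add: is_bop_def)

lemma is_bop_opsub:
  assumes "is_bop S" "is_bop R" shows "is_bop (opsub S R)"
proof -
  obtain C1 where C1: "\<And>x. x \<in> l2 \<Longrightarrow> l2norm (S x) \<le> C1 * l2norm x"
    using assms(1) unfolding is_bop_def by blast
  obtain C2 where C2: "\<And>x. x \<in> l2 \<Longrightarrow> l2norm (R x) \<le> C2 * l2norm x"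
    using assms(2) unfolding is_bop_def by blast
  have l2: "S x \<in> l2" "R x \<in> l2" if "x \<in> l2" for x using assms that by (auto simp: is_bop_def)
  have "l2norm (opsub S R x) \<le> (C1 + C2) * l2norm x" if "x \<in> l2" for x
    using l2norm_vsub_le[OF l2[OF that]] C1[OF that] C2[OF that] by (simp add: opsub_def distrib_right)
  moreover have "opsub S R x = zvec" if "x \<notin> l2" for x
    using assms that by (simp add: is_bop_def opsub_def vsub_def zvec_def)
  moreover have "opsub S R (vadd x y) = vadd (opsub S R x) (opsub S R y)" if "x \<in> l2" "y \<in> l2" for x y
    using assms that by (simp add: is_bop_def opsub_def vsub_def vadd_def fun_eq_iff)
  moreover have "opsub S R (vscale c x) = vscale c (opsub S R x)" if "x \<in> l2" for x c
    using assms that by (simp add: is_bop_def opsub_def vsub_def vscale_def algebra_simps)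
  ultimately show ?thesis using l2 by (auto simp: is_bop_def opsub_def l2_vsub)
qed

lemma opnorm_opsub_triangle:
  assumes "is_bop S" "is_bop P" "is_bop R"
  shows "opnorm (opsub S R) \<le> opnorm (opsub S P) + opnorm (opsub P R)"
proof (rule opnorm_le)
  fix x assume x: "x \<in> l2" "l2norm x \<le> 1"
  have bops: "is_bop (opsub S P)" "is_bop (opsub P R)"
    using assms by (simp_all add: is_bop_opsub)
  then have l2: "opsub S P x \<in> l2" "opsub P R x \<in> l2" using x by (simp_all add: is_bop_def)
  have "opsub S R x = vadd (opsub S P x) (opsub P R x)"
    by (simp add: opsub_def vsub_def vadd_def)
  then have "l2norm (opsub S R x) \<le> l2norm (opsub S P x) + l2norm (opsub P R x)"
    using l2norm_vadd_le[OF l2] by simp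
  also have "\<dots> \<le> opnorm (opsub S P) * l2norm x + opnorm (opsub P R) * l2norm x"
    using l2norm_bop_le[OF _ x(1)] bops by (intro add_mono) auto
  also have "\<dots> \<le> opnorm (opsub S P) + opnorm (opsub P R)"
    using x opnorm_nonneg[OF bops(1)] opnorm_nonneg[OF bops(2)]
    by (intro add_mono) (auto intro: mult_left_le)
  finally show "l2norm (opsub S R x) \<le> opnorm (opsub S P) + opnorm (opsub P R)" .
qed

lemma bop_eqI_opnorm:
  assumes "is_bop S" "is_bop R" "\<And>e. e > 0 \<Longrightarrow> opnorm (opsub S R) \<le> e"
  shows "S = R"
proof
  fix x
  show "S x = R x"
  proof (cases "x \<in> l2")
    case True
    have bop: "is_bop (opsub S R)" using assms(1,2) by (rule is_bop_opsub)
    have l2: "opsub S R x \<in> l2" using bop True by (simp add: is_bop_def)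
    have "opnorm (opsub S R) \<le> 0" using assms(3) by (rule field_le_epsilon) simp
    then have "opnorm (opsub S R) * l2norm x \<le> 0"
      using l2norm_nonneg[OF True] by (simp add: mult_nonpos_nonneg)
    then have "l2norm (opsub S R x) = 0"
      using l2norm_bop_le[OF bop True] l2norm_nonneg[OF l2] by linarith
    then have "opsub S R x = zvec" using l2norm_eq_zero l2 by blast
    then show ?thesis by (simp add: opsub_def vsub_def zvec_def fun_eq_iff)
  qed (use assms in \<open>simp add: is_bop_def\<close>)
qed

lemma l2norm_vsub_commute: "l2norm (vsub x y) = l2norm (vsub y x)"
  unfolding l2norm_def vsub_def by (simp add: norm_minus_commute)

lemma l2norm_vsub_basis_vec_0_le:
  assumes "is_bop S" "is_bop R"
  shows "l2norm (vsub (S (basis_vec 0)) (R (basis_vec 0))) \<le> opnorm (opsub S R)"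
  using l2norm_bop_le[OF is_bop_opsub[OF assms] basis_vec_l2, of 0] by (simp add: opsub_def)

lemma A_T_subset_A_T_tilde: "A_T a \<subseteq> A_T_tilde a"
  unfolding A_T_def A_T_tilde_def by blast

section \<open>Weighted convolution\<close>

definition wprod :: "(nat \<Rightarrow> complex) \<Rightarrow> nat \<Rightarrow> complex" where
  "wprod a n = (\<Prod>j<n. a j)"

definition wfps :: "(nat \<Rightarrow> complex) \<Rightarrow> vec \<Rightarrow> complex fps" where
  "wfps a x = Abs_fps (\<lambda>n. x n / wprod a n)"

definition wconv :: "(nat \<Rightarrow> complex) \<Rightarrow> vec \<Rightarrow> vec \<Rightarrow> vec" where
  "wconv a x y = (\<lambda>n. wprod a n * fps_nth (wfps a x * wfps a y) n)"

definition shift_orbit :: "(nat \<Rightarrow> complex) \<Rightarrow> nat \<Rightarrow> vec" where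
  "shift_orbit a k = (\<lambda>n. if n = k then wprod a k else 0)"

definition conv_coeff :: "(nat \<Rightarrow> complex) \<Rightarrow> nat \<Rightarrow> nat \<Rightarrow> complex" where
  "conv_coeff a m i = wprod a m / (wprod a i * wprod a (m - i))"

definition conv_const :: "(nat \<Rightarrow> complex) \<Rightarrow> real" where
  "conv_const a = 4 + 2 * (\<Sum>n. (cmod (a n))\<^sup>2) / (cmod (a 0))\<^sup>2"

definition mult_op :: "(nat \<Rightarrow> complex) \<Rightarrow> vec \<Rightarrow> op" where
  "mult_op a x = (\<lambda>y. if y \<in> l2 then wconv a x y else zvec)"

lemma wprod_0 [simp]: "wprod a 0 = 1"
  by (simp add: wprod_def)

lemma wprod_Suc: "wprod a (Suc n) = a n * wprod a n"
  by (simp add: wprod_def)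

lemma wconv_eq_sum_conv_coeff:
  "wconv a x y m = (\<Sum>i\<le>m. conv_coeff a m i * (x i * y (m - i)))"
  unfolding wconv_def wfps_def conv_coeff_def fps_mult_nth atLeast0AtMost sum_distrib_left
  by (intro sum.cong refl) (simp add: divide_inverse mult_ac)

lemma shift_orbit_l2: "shift_orbit a k \<in> l2"
  by (rule finite_support_l2[of k]) (simp add: shift_orbit_def)

lemma shift_orbit_0: "shift_orbit a 0 = basis_vec 0"
  by (simp add: shift_orbit_def basis_vec_def fun_eq_iff)

lemma wfps_sum: "wfps a (\<lambda>j. \<Sum>k\<in>A. f k j) = (\<Sum>k\<in>A. wfps a (f k))"
  by (simp add: fps_eq_iff wfps_def fps_sum_nth sum_divide_distrib)

locale nonzero_weights =
  fixes a :: "nat \<Rightarrow> complex"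
  assumes nonzero: "\<And>n. a n \<noteq> 0"
begin

lemma wprod_nonzero: "wprod a n \<noteq> 0"
  by (simp add: wprod_def nonzero)

lemma wfps_inject: "wfps a x = wfps a y \<Longrightarrow> x = y"
  using wprod_nonzero by (auto simp: wfps_def fun_eq_iff fps_eq_iff)

lemma wfps_wconv: "wfps a (wconv a x y) = wfps a x * wfps a y"
  using wprod_nonzero unfolding fps_eq_iff
  by (simp only: wfps_def[of a "wconv a x y"] fps_nth_Abs_fps) (simp add: wconv_def)

lemma wfps_vadd: "wfps a (vadd x y) = wfps a x + wfps a y"
  by (simp add: fps_eq_iff wfps_def vadd_def add_divide_distrib)

lemma wfps_vsub: "wfps a (vsub x y) = wfps a x - wfps a y"
  by (simp add: fps_eq_iff wfps_def vsub_def diff_divide_distrib)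

lemma wfps_vscale: "wfps a (vscale c x) = fps_const c * wfps a x"
  by (simp add: fps_eq_iff wfps_def vscale_def)

lemma wfps_zvec: "wfps a zvec = 0"
  by (simp add: fps_eq_iff wfps_def zvec_def)

lemma wfps_shift_orbit: "wfps a (shift_orbit a k) = fps_X ^ k"
  using wprod_nonzero by (simp add: fps_eq_iff wfps_def shift_orbit_def)

lemma wfps_basis_vec_0: "wfps a (basis_vec 0) = 1"
  using wfps_shift_orbit[of 0] by (simp add: shift_orbit_0)

lemma wconv_commute: "wconv a x y = wconv a y x"
  by (simp add: wconv_def mult.commute)

lemma wconv_assoc: "wconv a x (wconv a y z) = wconv a (wconv a x y) z"
  by (rule wfps_inject) (simp add: wfps_wconv mult.assoc)

lemma wconv_vadd_left: "wconv a (vadd x x') y = vadd (wconv a x y) (wconv a x' y)"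
  by (rule wfps_inject) (simp add: wfps_wconv wfps_vadd distrib_right)

lemma wconv_vadd_right: "wconv a y (vadd x x') = vadd (wconv a y x) (wconv a y x')"
  by (rule wfps_inject) (simp add: wfps_wconv wfps_vadd distrib_left)

lemma wconv_vsub_left: "wconv a (vsub x x') y = vsub (wconv a x y) (wconv a x' y)"
  by (rule wfps_inject) (simp add: wfps_wconv wfps_vsub left_diff_distrib)

lemma wconv_vscale_left: "wconv a (vscale c x) y = vscale c (wconv a x y)"
  by (rule wfps_inject) (simp add: wfps_wconv wfps_vscale mult.assoc)

lemma wconv_vscale_right: "wconv a y (vscale c x) = vscale c (wconv a y x)"
  by (rule wfps_inject) (simp add: wfps_wconv wfps_vscale mult.left_commute)

lemma wconv_zvec_left: "wconv a zvec y = zvec"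
  by (rule wfps_inject) (simp add: wfps_wconv wfps_zvec)

lemma wconv_zvec_right: "wconv a y zvec = zvec"
  by (rule wfps_inject) (simp add: wfps_wconv wfps_zvec)

lemma wconv_basis_vec_0_right: "wconv a x (basis_vec 0) = x"
  by (rule wfps_inject) (simp add: wfps_wconv wfps_basis_vec_0)

lemma wfps_wshift:
  assumes "y \<in> l2" shows "wfps a (wshift a y) = fps_X * wfps a y"
proof (rule fps_ext)
  fix n
  show "fps_nth (wfps a (wshift a y)) n = fps_nth (fps_X * wfps a y) n"
    using assms wprod_nonzero nonzero
    by (cases n) (simp_all add: wfps_def wshift_def fps_X_mult_nth wprod_Suc)
qed

lemma wshift_eq_mult_op: "wshift a = mult_op a (shift_orbit a 1)"
proof
  fix y
  show "wshift a y = mult_op a (shift_orbit a 1) y"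
  proof (cases "y \<in> l2")
    case True
    then have "wfps a (wshift a y) = wfps a (mult_op a (shift_orbit a 1) y)"
      by (simp add: mult_op_def wfps_wconv wfps_wshift wfps_shift_orbit)
    then show ?thesis by (rule wfps_inject)
  qed (simp add: mult_op_def wshift_def)
qed

lemma mult_op_basis_vec_0: "mult_op a x (basis_vec 0) = x"
  by (simp add: mult_op_def wconv_basis_vec_0_right)

lemma opsub_mult_op: "opsub (mult_op a x) (mult_op a y) = mult_op a (vsub x y)"
  unfolding mult_op_def opsub_def by (rule ext) (simp add: wconv_vsub_left)

lemma opadd_mult_op: "opadd (mult_op a x) (mult_op a y) = mult_op a (vadd x y)"
  unfolding mult_op_def opadd_def by (rule ext) (simp add: wconv_vadd_left)

lemma opscale_mult_op: "opscale c (mult_op a x) = mult_op a (vscale c x)"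
  unfolding mult_op_def opscale_def by (rule ext) (simp add: wconv_vscale_left)

lemma mult_op_zvec: "mult_op a zvec = zop"
  by (simp add: mult_op_def zop_def wconv_zvec_left fun_eq_iff)

lemma wfps_trunc_coeffs:
  "wfps a (trunc (\<lambda>k. c k * wprod a k) N) = (\<Sum>k\<le>N. fps_const (c k) * fps_X ^ k)"
  using wprod_nonzero
  by (auto simp: fps_eq_iff wfps_def trunc_def fps_sum_nth if_distrib[of "(*) _"] sum.delta cong: if_cong)

end

locale shift_weights = nonzero_weights +
  assumes decreasing: "\<And>n. cmod (a (Suc n)) \<le> cmod (a n)"
    and square_summable: "summable (\<lambda>n. (cmod (a n))\<^sup>2)"
begin

lemma norm_weight_antimono: "i \<le> j \<Longrightarrow> cmod (a j) \<le> cmod (a i)"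
  using lift_Suc_antimono_le[of "\<lambda>n. cmod (a n)"] decreasing by blast

lemma norm_wprod_add_le:
  assumes "1 \<le> k"
  shows "cmod (wprod a (n + k)) * cmod (a 0) \<le> cmod (wprod a n) * cmod (wprod a k) * cmod (a n)"
  using assms
proof (induction k rule: dec_induct)
  case base
  then show ?case by (simp add: wprod_Suc norm_mult)
next
  case (step k)
  have "cmod (wprod a (n + Suc k)) * cmod (a 0) = cmod (a (n + k)) * (cmod (wprod a (n + k)) * cmod (a 0))"
    by (simp add: wprod_Suc norm_mult)
  also have "\<dots> \<le> cmod (a (n + k)) * (cmod (wprod a n) * cmod (wprod a k) * cmod (a n))"
    using step.IH by (simp add: mult_left_mono)
  also have "\<dots> \<le> cmod (a k) * (cmod (wprod a n) * cmod (wprod a k) * cmod (a n))"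
    using norm_weight_antimono[of k "n + k"] by (simp add: mult_right_mono)
  also have "\<dots> = cmod (wprod a n) * cmod (wprod a (Suc k)) * cmod (a n)"
    by (simp add: wprod_Suc norm_mult)
  finally show ?case .
qed

lemma norm_conv_coeff_le:
  assumes "i < m" shows "cmod (conv_coeff a m i) \<le> cmod (a i) / cmod (a 0)"
proof -
  have "cmod (wprod a m) * cmod (a 0) \<le> cmod (wprod a i) * cmod (wprod a (m - i)) * cmod (a i)"
    using norm_wprod_add_le[of "m - i" i] assms by simp
  moreover have "cmod (wprod a i) * cmod (wprod a (m - i)) > 0" "cmod (a 0) > 0"
    using wprod_nonzero nonzero by auto
  ultimately show ?thesis
    unfolding conv_coeff_def norm_divide norm_mult by (simp add: divide_simps mult_ac)
qed

lemma conv_coeff_sym: "i \<le> m \<Longrightarrow> conv_coeff a m (m - i) = conv_coeff a m i"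
  by (simp add: conv_coeff_def mult.commute)

lemma norm_conv_coeff_le_middle:
  assumes "0 < i" "i < m" shows "cmod (conv_coeff a m i) \<le> cmod (a (m div 2)) / cmod (a 0)"
proof (cases "m div 2 \<le> i")
  case True
  have "cmod (conv_coeff a m i) \<le> cmod (a i) / cmod (a 0)"
    using norm_conv_coeff_le assms by simp
  also have "\<dots> \<le> cmod (a (m div 2)) / cmod (a 0)"
    using norm_weight_antimono[OF True] by (simp add: divide_right_mono)
  finally show ?thesis .
next
  case False
  have "cmod (conv_coeff a m i) = cmod (conv_coeff a m (m - i))"
    using conv_coeff_sym[of i m] assms by simp
  also have "\<dots> \<le> cmod (a (m - i)) / cmod (a 0)"
    using norm_conv_coeff_le[of "m - i" m] assms by simp
  also have "\<dots> \<le> cmod (a (m div 2)) / cmod (a 0)"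
    using norm_weight_antimono[of "m div 2" "m - i"] False by (simp add: divide_right_mono)
  finally show ?thesis .
qed

lemma of_nat_mult_norm_weight_sq_le: "real p * (cmod (a p))\<^sup>2 \<le> (\<Sum>n. (cmod (a n))\<^sup>2)"
proof -
  have "real p * (cmod (a p))\<^sup>2 = (\<Sum>j<p. (cmod (a p))\<^sup>2)" by simp
  also have "\<dots> \<le> (\<Sum>j<p. (cmod (a j))\<^sup>2)"
    by (rule sum_mono) (use norm_weight_antimono in \<open>auto intro: power_mono\<close>)
  also have "\<dots> \<le> (\<Sum>n. (cmod (a n))\<^sup>2)"
    by (rule sum_le_suminf) (use square_summable in auto)
  finally show ?thesis .
qed

lemma conv_const_nonneg: "0 \<le> conv_const a"
  unfolding conv_const_def using suminf_nonneg[OF square_summable] by simp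

lemma of_nat_Suc_mult_norm_middle_weight_sq_le:
  "real (Suc m) * (cmod (a (m div 2)))\<^sup>2 \<le> 2 * (\<Sum>n. (cmod (a n))\<^sup>2) + 2 * (cmod (a 0))\<^sup>2"
proof -
  have "real (Suc m) * (cmod (a (m div 2)))\<^sup>2 \<le> (2 * real (m div 2) + 2) * (cmod (a (m div 2)))\<^sup>2"
    by (intro mult_right_mono) auto
  also have "\<dots> = 2 * (real (m div 2) * (cmod (a (m div 2)))\<^sup>2) + 2 * (cmod (a (m div 2)))\<^sup>2"
    by (simp add: algebra_simps)
  also have "\<dots> \<le> 2 * (\<Sum>n. (cmod (a n))\<^sup>2) + 2 * (cmod (a 0))\<^sup>2"
    using of_nat_mult_norm_weight_sq_le[of "m div 2"] norm_weight_antimono[of 0 "m div 2"]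
    by (intro add_mono mult_left_mono power_mono) auto
  finally show ?thesis .
qed

lemma sum_norm_conv_coeff_sq_le: "(\<Sum>i\<le>m. (cmod (conv_coeff a m i))\<^sup>2) \<le> conv_const a"
proof -
  define q where "q = (cmod (a (m div 2)) / cmod (a 0))\<^sup>2"
  have "(cmod (conv_coeff a m i))\<^sup>2 \<le> (if i = 0 then 1 else 0) + (if i = m then 1 else 0) + q"
    if im: "i \<le> m" for i
  proof -
    consider "i = 0" | "i = m" | "0 < i \<and> i < m"
      using im by (metis le_neq_implies_less not_gr_zero)
    then show ?thesis
    proof cases
      case 3
      then have "(cmod (conv_coeff a m i))\<^sup>2 \<le> q"
        unfolding q_def by (intro power_mono norm_conv_coeff_le_middle) auto
      then show ?thesis using 3 by simp
    qed (auto simp: conv_coeff_def q_def wprod_nonzero)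
  qed
  then have "(\<Sum>i\<le>m. (cmod (conv_coeff a m i))\<^sup>2) \<le> (\<Sum>i\<le>m. (if i = 0 then 1 else 0) + (if i = m then 1 else 0) + q)"
    by (intro sum_mono) simp
  also have "\<dots> = 2 + real (Suc m) * q"
    by (simp add: sum.distrib)
  also have "\<dots> \<le> conv_const a"
  proof -
    have "real (Suc m) * (cmod (a (m div 2)))\<^sup>2 / (cmod (a 0))\<^sup>2
        \<le> (2 * (\<Sum>n. (cmod (a n))\<^sup>2) + 2 * (cmod (a 0))\<^sup>2) / (cmod (a 0))\<^sup>2"
      by (rule divide_right_mono[OF of_nat_Suc_mult_norm_middle_weight_sq_le]) simp
    then show ?thesis
      using nonzero[of 0] by (simp add: q_def conv_const_def power_divide add_divide_distrib)
  qed
  finally show ?thesis .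
qed

lemma norm_wconv_sq_le:
  "(cmod (wconv a x y m))\<^sup>2 \<le> conv_const a * (\<Sum>i\<le>m. (cmod (x i))\<^sup>2 * (cmod (y (m - i)))\<^sup>2)"
proof -
  have "cmod (wconv a x y m) \<le> (\<Sum>i\<le>m. cmod (conv_coeff a m i) * (cmod (x i) * cmod (y (m - i))))"
    unfolding wconv_eq_sum_conv_coeff by (rule order_trans[OF norm_sum]) (simp add: norm_mult)
  then have "(cmod (wconv a x y m))\<^sup>2 \<le> (\<Sum>i\<le>m. cmod (conv_coeff a m i) * (cmod (x i) * cmod (y (m - i))))\<^sup>2"
    by (simp add: power_mono)
  also have "\<dots> \<le> (\<Sum>i\<le>m. (cmod (conv_coeff a m i))\<^sup>2) * (\<Sum>i\<le>m. (cmod (x i) * cmod (y (m - i)))\<^sup>2)"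
    by (rule Cauchy_Schwarz_ineq_sum)
  also have "\<dots> \<le> conv_const a * (\<Sum>i\<le>m. (cmod (x i) * cmod (y (m - i)))\<^sup>2)"
    by (rule mult_right_mono[OF sum_norm_conv_coeff_sq_le]) (simp add: sum_nonneg)
  finally show ?thesis by (simp add: power_mult_distrib)
qed

lemma wconv_l2_bound:
  assumes "x \<in> l2" "y \<in> l2"
  shows "wconv a x y \<in> l2" and "l2norm (wconv a x y) \<le> sqrt (conv_const a) * l2norm x * l2norm y"
proof -
  let ?c = "\<lambda>m. (\<Sum>i\<le>m. (cmod (x i))\<^sup>2 * (cmod (y (m - i)))\<^sup>2)"
  have "?c sums ((\<Sum>k. (cmod (x k))\<^sup>2) * (\<Sum>k. (cmod (y k))\<^sup>2))"
    using assms by (intro Cauchy_product_sums) (auto simp: l2_def)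
  then have c: "summable ?c" "suminf ?c = (l2norm x)\<^sup>2 * (l2norm y)\<^sup>2"
    using l2norm_sq assms by (auto simp: sums_iff)
  have sc: "summable (\<lambda>m. conv_const a * ?c m)"
    using c(1) by (rule summable_mult)
  have s: "summable (\<lambda>m. (cmod (wconv a x y m))\<^sup>2)"
    by (rule summable_comparison_test[OF _ sc]) (use norm_wconv_sq_le in simp)
  then show l2: "wconv a x y \<in> l2" by (simp add: l2_def)
  have "(l2norm (wconv a x y))\<^sup>2 \<le> (\<Sum>m. conv_const a * ?c m)"
    using suminf_le[OF norm_wconv_sq_le s sc] l2norm_sq[OF l2] by simp
  also have "\<dots> = (sqrt (conv_const a) * l2norm x * l2norm y)\<^sup>2"
    using c conv_const_nonneg by (simp add: suminf_mult power_mult_distrib)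
  finally show "l2norm (wconv a x y) \<le> sqrt (conv_const a) * l2norm x * l2norm y"
    by (rule power2_le_imp_le) (use conv_const_nonneg l2norm_nonneg assms in simp)
qed

section \<open>Multiplication operators and the closure of the polynomials in T\<close>

lemma is_bop_mult_op:
  assumes "x \<in> l2" shows "is_bop (mult_op a x)"
  unfolding is_bop_def
proof (intro conjI allI ballI impI)
  show "\<exists>C. \<forall>y\<in>l2. l2norm (mult_op a x y) \<le> C * l2norm y"
    using wconv_l2_bound(2)[OF assms]
    by (auto simp: mult_op_def intro!: exI[of _ "sqrt (conv_const a) * l2norm x"])
qed (auto simp: mult_op_def wconv_l2_bound(1)[OF assms] wconv_vadd_right wconv_vscale_right
    l2_vadd l2_vscale)

lemma opnorm_mult_op_le:
  assumes "x \<in> l2" shows "opnorm (mult_op a x) \<le> sqrt (conv_const a) * l2norm x"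
proof (rule opnorm_le)
  fix y assume y: "y \<in> l2" "l2norm y \<le> 1"
  have "l2norm (mult_op a x y) \<le> sqrt (conv_const a) * l2norm x * l2norm y"
    using wconv_l2_bound(2)[OF assms y(1)] y by (simp add: mult_op_def)
  also have "\<dots> \<le> sqrt (conv_const a) * l2norm x"
    using y conv_const_nonneg l2norm_nonneg[OF assms] by (simp add: mult_left_le)
  finally show "l2norm (mult_op a x y) \<le> sqrt (conv_const a) * l2norm x" .
qed

lemma opnorm_opsub_mult_op_le:
  assumes "x \<in> l2" "y \<in> l2"
  shows "opnorm (opsub (mult_op a x) (mult_op a y)) \<le> sqrt (conv_const a) * l2norm (vsub x y)"
  using opnorm_mult_op_le[OF l2_vsub[OF assms]] by (simp add: opsub_mult_op)

lemma mult_op_comp: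
  assumes "x \<in> l2" "y \<in> l2" shows "mult_op a x \<circ> mult_op a y = mult_op a (wconv a x y)"
proof
  fix z
  show "(mult_op a x \<circ> mult_op a y) z = mult_op a (wconv a x y) z"
    using wconv_l2_bound(1)[OF assms(2), of z]
    by (cases "z \<in> l2") (simp_all add: mult_op_def wconv_assoc wconv_zvec_right)
qed

lemma wshift_l2: "y \<in> l2 \<Longrightarrow> wshift a y \<in> l2"
  using is_bop_mult_op[OF shift_orbit_l2] by (simp add: wshift_eq_mult_op is_bop_def)

lemma wfps_wshift_power:
  assumes "y \<in> l2"
  shows "(wshift a ^^ k) y \<in> l2 \<and> wfps a ((wshift a ^^ k) y) = fps_X ^ k * wfps a y"
  by (induction k) (simp_all add: assms wshift_l2 wfps_wshift mult.assoc)

lemma polyT_eq_mult_op: "polyT a c N = mult_op a (trunc (\<lambda>k. c k * wprod a k) N)"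
proof
  fix y
  show "polyT a c N y = mult_op a (trunc (\<lambda>k. c k * wprod a k) N) y"
  proof (cases "y \<in> l2")
    case True
    have "wfps a (polyT a c N y) = (\<Sum>k\<le>N. fps_const (c k) * fps_X ^ k) * wfps a y"
      using True wfps_wshift_power[OF True]
      by (simp add: polyT_def wfps_sum wfps_vscale[unfolded vscale_def] sum_distrib_right mult.assoc)
    then show ?thesis
      using True by (intro wfps_inject) (simp add: mult_op_def wfps_wconv wfps_trunc_coeffs)
  qed (simp add: polyT_def mult_op_def)
qed

lemma polyT_eq_mult_op_trunc: "polyT a (\<lambda>k. x k / wprod a k) N = mult_op a (trunc x N)"
  using wprod_nonzero by (simp add: polyT_eq_mult_op trunc_def)

lemma opnorm_mult_op_trunc_small:
  assumes "x \<in> l2" "e > 0"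
  obtains N where "opnorm (opsub (mult_op a x) (mult_op a (trunc x N))) < e"
proof -
  let ?C = "sqrt (conv_const a)"
  have "e / (?C + 1) > 0" using assms conv_const_nonneg by (simp add: add_nonneg_pos)
  then obtain N where N: "l2norm (vsub x (trunc x N)) < e / (?C + 1)"
    using l2norm_tail_small[OF assms(1)] by blast
  have "opnorm (opsub (mult_op a x) (mult_op a (trunc x N))) \<le> ?C * l2norm (vsub x (trunc x N))"
    using opnorm_opsub_mult_op_le[OF assms(1) trunc_l2] .
  also have "\<dots> < e"
    using N conv_const_nonneg l2norm_nonneg[OF l2_vsub[OF assms(1) trunc_l2]]
    by (intro mult_less_if_less_divide) auto
  finally show ?thesis using that by blast
qed

lemma mult_op_in_A_T_tilde:
  assumes "x \<in> l2" shows "mult_op a x \<in> A_T_tilde a"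
proof -
  have "\<exists>c n. opnorm (opsub (mult_op a x) (polyT a c n)) < e" if "e > 0" for e
    using opnorm_mult_op_trunc_small[OF assms that] polyT_eq_mult_op_trunc by metis
  then show ?thesis using is_bop_mult_op[OF assms] by (simp add: A_T_tilde_def)
qed

lemma mult_op_in_A_T:
  assumes "x \<in> H1" shows "mult_op a x \<in> A_T a"
proof -
  have x: "x \<in> l2" "x 0 = 0" using assms by (simp_all add: H1_eq)
  have "\<exists>c n. c 0 = 0 \<and> opnorm (opsub (mult_op a x) (polyT a c n)) < e" if e: "e > 0" for e
  proof -
    obtain N where "opnorm (opsub (mult_op a x) (mult_op a (trunc x N))) < e"
      using opnorm_mult_op_trunc_small[OF x(1) e] .
    then show ?thesis using x(2) polyT_eq_mult_op_trunc[of x N]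
      by (intro exI[of _ "\<lambda>k. x k / wprod a k"] exI[of _ N]) simp
  qed
  then show ?thesis using is_bop_mult_op[OF x(1)] by (simp add: A_T_def)
qed

lemma A_T_tilde_eq_mult_op:
  assumes S: "S \<in> A_T_tilde a" shows "S = mult_op a (S (basis_vec 0))"
proof -
  let ?x = "S (basis_vec 0)" and ?C = "sqrt (conv_const a)"
  have bop: "is_bop S" using S by (simp add: A_T_tilde_def)
  then have x: "?x \<in> l2" by (simp add: is_bop_def)
  show ?thesis
  proof (rule bop_eqI_opnorm[OF bop is_bop_mult_op[OF x]])
    fix e :: real assume "e > 0"
    define d where "d = e / (?C + 1)"
    have C: "?C + 1 > 0" using conv_const_nonneg by (simp add: add_nonneg_pos)
    then have "d > 0" using \<open>e > 0\<close> by (simp add: d_def)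
    then obtain c n where "opnorm (opsub S (polyT a c n)) < d"
      using S by (auto simp: A_T_tilde_def)
    moreover define p where "p = trunc (\<lambda>k. c k * wprod a k) n"
    ultimately have close: "opnorm (opsub S (mult_op a p)) < d"
      by (simp add: polyT_eq_mult_op)
    have p: "p \<in> l2" by (simp add: p_def trunc_l2)
    have "l2norm (vsub p ?x) \<le> d"
      using l2norm_vsub_basis_vec_0_le[OF bop is_bop_mult_op[OF p]] close
      by (simp add: mult_op_basis_vec_0 l2norm_vsub_commute)
    then have "?C * l2norm (vsub p ?x) \<le> ?C * d" by (rule mult_left_mono) (simp add: conv_const_nonneg)
    then have far: "opnorm (opsub (mult_op a p) (mult_op a ?x)) \<le> ?C * d"
      using opnorm_opsub_mult_op_le[OF p x] by linarith
    have "opnorm (opsub S (mult_op a ?x))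
        \<le> opnorm (opsub S (mult_op a p)) + opnorm (opsub (mult_op a p) (mult_op a ?x))"
      using bop is_bop_mult_op p x by (intro opnorm_opsub_triangle)
    also have "\<dots> \<le> (?C + 1) * d" using close far by (simp add: algebra_simps)
    also have "\<dots> = e" using C by (simp add: d_def)
    finally show "opnorm (opsub S (mult_op a ?x)) \<le> e" .
  qed
qed

lemma A_T_basis_vec_0_in_H1:
  assumes S: "S \<in> A_T a" shows "S (basis_vec 0) \<in> H1"
proof (rule H1_closed)
  have bop: "is_bop S" using S by (simp add: A_T_def)
  then show "S (basis_vec 0) \<in> l2" by (simp add: is_bop_def)
  show "\<forall>e>0. \<exists>y\<in>H1. l2norm (vsub (S (basis_vec 0)) y) < e"
  proof (intro allI impI)
    fix e :: real assume "e > 0"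
    then obtain c n where c: "c 0 = 0" "opnorm (opsub S (polyT a c n)) < e"
      using S by (auto simp: A_T_def)
    define p where "p = trunc (\<lambda>k. c k * wprod a k) n"
    have "p \<in> l2" by (simp add: p_def trunc_l2)
    then have p: "p \<in> H1" using c(1) by (simp add: H1_eq p_def trunc_def)
    have "l2norm (vsub (S (basis_vec 0)) p) < e"
      using l2norm_vsub_basis_vec_0_le[OF bop is_bop_mult_op[of p]] p c(2)
      by (simp add: p_def polyT_eq_mult_op mult_op_basis_vec_0 H1_eq)
    then show "\<exists>y\<in>H1. l2norm (vsub (S (basis_vec 0)) y) < e" using p by blast
  qed
qed

lemma A_T_tilde_eq: "A_T_tilde a = mult_op a ` l2"
proof
  show "A_T_tilde a \<subseteq> mult_op a ` l2"
  proof
    fix S assume S: "S \<in> A_T_tilde a"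
    then have "S (basis_vec 0) \<in> l2" by (simp add: A_T_tilde_def is_bop_def)
    then show "S \<in> mult_op a ` l2" using A_T_tilde_eq_mult_op[OF S] by blast
  qed
qed (auto intro: mult_op_in_A_T_tilde)

lemma A_T_eq: "A_T a = mult_op a ` H1"
proof
  show "A_T a \<subseteq> mult_op a ` H1"
  proof
    fix S assume S: "S \<in> A_T a"
    then have "S = mult_op a (S (basis_vec 0))"
      using A_T_subset_A_T_tilde A_T_tilde_eq_mult_op by blast
    then show "S \<in> mult_op a ` H1" using A_T_basis_vec_0_in_H1[OF S] by blast
  qed
qed (auto intro: mult_op_in_A_T)

end

section \<open>Closed ideals and closed invariant subspaces\<close>

lemma lattice_iso_imageI:
  assumes inj: "inj_on f A" and sub: "\<And>J. J \<in> L1 \<Longrightarrow> J \<subseteq> A"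
    and onto: "(\<lambda>J. f ` J) ` L1 = L2"
  shows "lattice_iso (\<lambda>J. f ` J) L1 L2"
  unfolding lattice_iso_def bij_betw_def
proof (intro conjI ballI onto)
  show "inj_on (\<lambda>J. f ` J) L1"
  proof (rule inj_onI)
    fix J1 J2 assume "J1 \<in> L1" "J2 \<in> L1" "f ` J1 = f ` J2"
    then show "J1 = J2" using inj_on_image_eq_iff[OF inj sub sub] by simp
  qed
next
  fix J1 J2 assume J1: "J1 \<in> L1" and J2: "J2 \<in> L1"
  show "J1 \<subseteq> J2 \<longleftrightarrow> f ` J1 \<subseteq> f ` J2"
  proof
    assume image_le: "f ` J1 \<subseteq> f ` J2"
    show "J1 \<subseteq> J2"
    proof
      fix S assume "S \<in> J1"
      then have "S \<in> A" "f S \<in> f ` J2" using sub[OF J1] image_le by blast+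
      then show "S \<in> J2" using inj_on_image_mem_iff[OF inj _ sub[OF J2]] by blast
    qed
  qed (rule image_mono)
qed

lemma closed_inv_subspace_power:
  "M \<in> closed_inv_subspaces T K \<Longrightarrow> s \<in> M \<Longrightarrow> (T ^^ k) s \<in> M"
  by (induction k) (auto simp: closed_inv_subspaces_def)

lemma closed_inv_subspace_lincomb_orbit:
  fixes N :: nat
  assumes M: "M \<in> closed_inv_subspaces T K" and s: "s \<in> M"
  shows "(\<lambda>j. \<Sum>k\<le>N. c k * (T ^^ k) s j) \<in> M"
proof (induction N)
  case 0
  then show ?case
    using M closed_inv_subspace_power[OF M s, of 0] by (simp add: closed_inv_subspaces_def vscale_def[symmetric])
next
  case (Suc N)
  have "(\<lambda>j. \<Sum>k\<le>Suc N. c k * (T ^^ k) s j)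
      = vadd (\<lambda>j. \<Sum>k\<le>N. c k * (T ^^ k) s j) (vscale (c (Suc N)) ((T ^^ Suc N) s))"
    by (simp add: vadd_def vscale_def)
  then show ?case
    using M Suc closed_inv_subspace_power[OF M s, of "Suc N"] by (simp add: closed_inv_subspaces_def)
qed

text \<open>K plays the role of the image of the algebra under S |-> S e_0: H1 for A_T, and l2 for
  its unitization.\<close>
locale shift_model_space = shift_weights +
  fixes K :: "vec set"
  assumes K_subset_l2: "K \<subseteq> l2"
    and K_closed: "\<And>x. x \<in> l2 \<Longrightarrow> \<forall>e>0. \<exists>y\<in>K. l2norm (vsub x y) < e \<Longrightarrow> x \<in> K"
    and shift_orbit_1_in_K: "shift_orbit a 1 \<in> K"
begin

abbreviation mult_algebra :: "op set" where
  "mult_algebra \<equiv> mult_op a ` K"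

lemma mult_algebra_elim:
  assumes "S \<in> mult_algebra"
  obtains x where "x \<in> K" "x \<in> l2" "S = mult_op a x" "S (basis_vec 0) = x"
  using assms K_subset_l2 mult_op_basis_vec_0 by blast

lemma opnorm_le_l2norm_eval:
  assumes "S \<in> mult_algebra" "R \<in> mult_algebra"
  shows "opnorm (opsub S R) \<le> sqrt (conv_const a) * l2norm (vsub (S (basis_vec 0)) (R (basis_vec 0)))"
  using assms by (elim mult_algebra_elim) (simp add: opnorm_opsub_mult_op_le)

lemma l2norm_eval_le_opnorm:
  assumes "S \<in> mult_algebra" "R \<in> mult_algebra"
  shows "l2norm (vsub (S (basis_vec 0)) (R (basis_vec 0))) \<le> opnorm (opsub S R)"
  using assms by (elim mult_algebra_elim) (metis l2norm_vsub_basis_vec_0_le is_bop_mult_op)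

lemma opnorm_less_if_l2norm_eval_less:
  assumes S: "S \<in> mult_algebra" and R: "R \<in> mult_algebra"
    and less: "l2norm (vsub (S (basis_vec 0)) (R (basis_vec 0))) < e / (sqrt (conv_const a) + 1)"
  shows "opnorm (opsub S R) < e"
proof -
  have "sqrt (conv_const a) * l2norm (vsub (S (basis_vec 0)) (R (basis_vec 0))) < e"
    using S R less conv_const_nonneg
    by (intro mult_less_if_less_divide) (auto elim!: mult_algebra_elim intro: l2norm_nonneg l2_vsub)
  then show ?thesis using opnorm_le_l2norm_eval[OF S R] by linarith
qed

lemma approx_opnorm_iff_approx_eval:
  assumes "S \<in> mult_algebra" "X \<subseteq> mult_algebra"
  shows "(\<forall>e>0. \<exists>R\<in>X. opnorm (opsub S R) < e) \<longleftrightarrow>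
         (\<forall>e>0. \<exists>R\<in>X. l2norm (vsub (S (basis_vec 0)) (R (basis_vec 0))) < e)"
proof (intro iffI allI impI)
  fix e :: real assume "\<forall>e>0. \<exists>R\<in>X. opnorm (opsub S R) < e" "e > 0"
  then show "\<exists>R\<in>X. l2norm (vsub (S (basis_vec 0)) (R (basis_vec 0))) < e"
    using l2norm_eval_le_opnorm assms by (meson le_less_trans subsetD)
next
  fix e :: real
  assume approx: "\<forall>e>0. \<exists>R\<in>X. l2norm (vsub (S (basis_vec 0)) (R (basis_vec 0))) < e" and "e > 0"
  then obtain R where R: "R \<in> X" "l2norm (vsub (S (basis_vec 0)) (R (basis_vec 0))) < e / (sqrt (conv_const a) + 1)"
    using conv_const_nonneg by (metis add_nonneg_pos divide_pos_pos real_sqrt_ge_zero zero_less_one)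
  then show "\<exists>R\<in>X. opnorm (opsub S R) < e"
    using opnorm_less_if_l2norm_eval_less[OF assms(1)] assms(2) by blast
qed

lemma inj_on_eval_mult_algebra: "inj_on (\<lambda>S. S (basis_vec 0)) mult_algebra"
  by (auto simp: inj_on_def mult_op_basis_vec_0)

lemma linear_homeo_eval: "linear_homeo (\<lambda>S. S (basis_vec 0)) mult_algebra K"
  unfolding linear_homeo_def
proof (intro conjI ballI allI impI)
  show "bij_betw (\<lambda>S. S (basis_vec 0)) mult_algebra K"
    by (rule bij_betw_imageI[OF inj_on_eval_mult_algebra]) (simp add: image_image mult_op_basis_vec_0)
next
  fix S e assume "S \<in> mult_algebra" "(e :: real) > 0"
  then show "\<exists>d>0. \<forall>R\<in>mult_algebra. opnorm (opsub R S) < d \<longrightarrow>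
      l2norm (vsub (R (basis_vec 0)) (S (basis_vec 0))) < e"
    using l2norm_eval_le_opnorm by (meson le_less_trans)
next
  fix S e assume S: "S \<in> mult_algebra" and "(e :: real) > 0"
  then have d: "e / (sqrt (conv_const a) + 1) > 0" using conv_const_nonneg by (simp add: add_nonneg_pos)
  have "opnorm (opsub R S) < e"
    if "R \<in> mult_algebra" "l2norm (vsub (R (basis_vec 0)) (S (basis_vec 0))) < e / (sqrt (conv_const a) + 1)" for R
    using that S by (intro opnorm_less_if_l2norm_eval_less)
  then show "\<exists>d>0. \<forall>R\<in>mult_algebra. l2norm (vsub (R (basis_vec 0)) (S (basis_vec 0))) < d \<longrightarrow>
      opnorm (opsub R S) < e"
    using d by blast
qed (simp_all add: opadd_def opscale_def)

lemma closed_inv_subspace_wconv: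
  assumes M: "M \<in> closed_inv_subspaces (wshift a) K" and r: "r \<in> l2" and s: "s \<in> M"
  shows "wconv a r s \<in> M"
proof -
  have sl2: "s \<in> l2" using s M K_subset_l2 by (auto simp: closed_inv_subspaces_def)
  have trunc_in: "wconv a (trunc r N) s \<in> M" for N
  proof -
    have "wconv a (trunc r N) s = polyT a (\<lambda>k. r k / wprod a k) N s"
      using sl2 by (simp add: polyT_eq_mult_op_trunc mult_op_def)
    also have "\<dots> = (\<lambda>j. \<Sum>k\<le>N. r k / wprod a k * (wshift a ^^ k) s j)"
      using sl2 by (simp add: polyT_def)
    finally show ?thesis by (simp only:) (rule closed_inv_subspace_lincomb_orbit[OF M s])
  qed
  have "\<exists>y\<in>M. l2norm (vsub (wconv a r s) y) < e" if "e > 0" for e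
  proof -
    obtain N where N: "opnorm (opsub (mult_op a r) (mult_op a (trunc r N))) < e / (l2norm s + 1)"
      using opnorm_mult_op_trunc_small[OF r] \<open>e > 0\<close> l2norm_nonneg[OF sl2]
      by (metis add_nonneg_pos divide_pos_pos zero_less_one)
    have bop: "is_bop (opsub (mult_op a r) (mult_op a (trunc r N)))"
      by (intro is_bop_opsub is_bop_mult_op r trunc_l2)
    have "l2norm s * opnorm (opsub (mult_op a r) (mult_op a (trunc r N))) < e"
      using N by (intro mult_less_if_less_divide l2norm_nonneg[OF sl2] opnorm_nonneg[OF bop])
    moreover have "l2norm (vsub (wconv a r s) (wconv a (trunc r N) s))
        \<le> opnorm (opsub (mult_op a r) (mult_op a (trunc r N))) * l2norm s"
      using l2norm_bop_le[OF bop sl2] sl2 by (simp add: opsub_def mult_op_def)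
    ultimately have "l2norm (vsub (wconv a r s) (wconv a (trunc r N) s)) < e"
      by (simp add: mult.commute)
    then show ?thesis using trunc_in by blast
  qed
  then show ?thesis
    using M wconv_l2_bound(1)[OF r sl2] by (simp add: closed_inv_subspaces_def)
qed

lemma wshift_in_mult_algebra: "wshift a \<in> mult_algebra"
  using shift_orbit_1_in_K by (simp add: wshift_eq_mult_op)

lemma closed_ideal_image:
  assumes J: "J \<in> closed_ideals mult_algebra"
  shows "(\<lambda>S. S (basis_vec 0)) ` J \<in> closed_inv_subspaces (wshift a) K"
proof -
  let ?F = "\<lambda>S. S (basis_vec 0)"
  have JA: "J \<subseteq> mult_algebra" using J by (simp add: closed_ideals_def)
  have FJ: "?F ` J \<subseteq> K" using JA by (auto elim!: mult_algebra_elim)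
  have closed: "x \<in> ?F ` J" if x: "x \<in> l2" and approx: "\<forall>e>0. \<exists>y\<in>?F ` J. l2norm (vsub x y) < e" for x
  proof -
    have xK: "x \<in> K" using K_closed[OF x] approx FJ by (meson subsetD)
    then have S: "mult_op a x \<in> mult_algebra" by blast
    have "\<forall>e>0. \<exists>R\<in>J. l2norm (vsub (mult_op a x (basis_vec 0)) (R (basis_vec 0))) < e"
      using approx by (simp add: mult_op_basis_vec_0)
    then have "mult_op a x \<in> J"
      using J xK approx_opnorm_iff_approx_eval[OF S JA] by (simp add: closed_ideals_def)
    then show ?thesis by (rule image_eqI[rotated]) (simp add: mult_op_basis_vec_0)
  qed
  show ?thesis
    unfolding closed_inv_subspaces_def mem_Collect_eq
  proof (intro conjI ballI allI impI)
    show "zvec \<in> ?F ` J"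
      using J by (intro image_eqI[of _ _ zop]) (simp_all add: zop_def closed_ideals_def)
  next
    fix x y assume "x \<in> ?F ` J" "y \<in> ?F ` J"
    then show "vadd x y \<in> ?F ` J"
      using J by (auto simp: closed_ideals_def opadd_def intro!: image_eqI)
  next
    fix c x assume "x \<in> ?F ` J"
    then show "vscale c x \<in> ?F ` J"
      using J by (auto simp: closed_ideals_def opscale_def intro!: image_eqI)
  next
    fix x assume "x \<in> ?F ` J"
    then obtain S where S: "S \<in> J" "x = ?F S" by blast
    then have "wshift a \<circ> S \<in> J"
      using J wshift_in_mult_algebra unfolding closed_ideals_def by blast
    then show "wshift a x \<in> ?F ` J" using S by (intro image_eqI[of _ _ "wshift a \<circ> S"]) simp_all
  qed (use FJ closed in auto)
qed

lemma closed_inv_subspace_preimage: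
  assumes M: "M \<in> closed_inv_subspaces (wshift a) K"
  shows "{S \<in> mult_algebra. S (basis_vec 0) \<in> M} \<in> closed_ideals mult_algebra"
proof -
  let ?J = "{S \<in> mult_algebra. S (basis_vec 0) \<in> M}"
  have MK: "M \<subseteq> K" using M by (simp add: closed_inv_subspaces_def)
  have J_iff: "mult_op a x \<in> ?J \<longleftrightarrow> x \<in> M" for x
    using MK by (auto simp: mult_op_basis_vec_0)
  have J_elim: "\<exists>s\<in>M. s \<in> l2 \<and> S = mult_op a s" if "S \<in> ?J" for S
    using that by (auto elim!: mult_algebra_elim)
  show ?thesis
    unfolding closed_ideals_def
  proof (rule CollectI, intro conjI ballI allI impI)
    have "zvec \<in> M" using M by (simp add: closed_inv_subspaces_def)
    then show "zop \<in> ?J" using J_iff by (simp add: mult_op_zvec[symmetric])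
  next
    fix S R assume "S \<in> ?J" "R \<in> ?J"
    then obtain s r where "s \<in> M" "r \<in> M" "S = mult_op a s" "R = mult_op a r"
      using J_elim by blast
    moreover have "vadd s r \<in> M" using M calculation by (simp add: closed_inv_subspaces_def)
    ultimately show "opadd S R \<in> ?J" using J_iff by (simp add: opadd_mult_op)
  next
    fix c S assume "S \<in> ?J"
    then obtain s where "s \<in> M" "S = mult_op a s" using J_elim by blast
    moreover have "vscale c s \<in> M" using M calculation by (simp add: closed_inv_subspaces_def)
    ultimately show "opscale c S \<in> ?J" using J_iff by (simp add: opscale_mult_op)
  next
    fix S R assume S: "S \<in> ?J" and R: "R \<in> mult_algebra"
    obtain s where s: "s \<in> M" "s \<in> l2" "S = mult_op a s" using J_elim[OF S] by blast
    obtain r where r: "r \<in> l2" "R = mult_op a r" using R K_subset_l2 by blast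
    have "wconv a r s \<in> M" by (rule closed_inv_subspace_wconv[OF M r(1) s(1)])
    then show "R \<circ> S \<in> ?J" "S \<circ> R \<in> ?J"
      using s r J_iff by (simp_all add: mult_op_comp wconv_commute[of s])
  next
    fix S assume S: "S \<in> mult_algebra" and approx: "\<forall>e>0. \<exists>R\<in>?J. opnorm (opsub S R) < e"
    have "?J \<subseteq> mult_algebra" by blast
    then have "\<forall>e>0. \<exists>R\<in>?J. l2norm (vsub (S (basis_vec 0)) (R (basis_vec 0))) < e"
      using approx approx_opnorm_iff_approx_eval[OF S] by blast
    then have "\<forall>e>0. \<exists>y\<in>M. l2norm (vsub (S (basis_vec 0)) y) < e" by blast
    moreover have "S (basis_vec 0) \<in> l2" using S K_subset_l2 by (auto simp: mult_op_basis_vec_0)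
    ultimately show "S \<in> ?J" using M S by (simp add: closed_inv_subspaces_def)
  qed blast
qed

lemma image_closed_inv_subspace_preimage:
  assumes "M \<subseteq> K"
  shows "(\<lambda>S. S (basis_vec 0)) ` {S \<in> mult_algebra. S (basis_vec 0) \<in> M} = M"
proof
  show "M \<subseteq> (\<lambda>S. S (basis_vec 0)) ` {S \<in> mult_algebra. S (basis_vec 0) \<in> M}"
  proof
    fix x assume "x \<in> M"
    then have "mult_op a x \<in> {S \<in> mult_algebra. S (basis_vec 0) \<in> M}"
      using assms by (auto simp: mult_op_basis_vec_0)
    then show "x \<in> (\<lambda>S. S (basis_vec 0)) ` {S \<in> mult_algebra. S (basis_vec 0) \<in> M}"
      by (rule image_eqI[rotated]) (simp add: mult_op_basis_vec_0)
  qed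
qed auto

lemma closed_inv_subspace_in_image:
  assumes "M \<in> closed_inv_subspaces (wshift a) K"
  shows "M \<in> (\<lambda>J. (\<lambda>S. S (basis_vec 0)) ` J) ` closed_ideals mult_algebra"
proof (rule image_eqI)
  show "M = (\<lambda>S. S (basis_vec 0)) ` {S \<in> mult_algebra. S (basis_vec 0) \<in> M}"
    using assms by (simp add: image_closed_inv_subspace_preimage closed_inv_subspaces_def)
  show "{S \<in> mult_algebra. S (basis_vec 0) \<in> M} \<in> closed_ideals mult_algebra"
    using assms by (rule closed_inv_subspace_preimage)
qed

lemma lattice_iso_eval_image:
  "lattice_iso (\<lambda>J. (\<lambda>S. S (basis_vec 0)) ` J) (closed_ideals mult_algebra) (closed_inv_subspaces (wshift a) K)"
proof (rule lattice_iso_imageI[OF inj_on_eval_mult_algebra])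
  show "\<And>J. J \<in> closed_ideals mult_algebra \<Longrightarrow> J \<subseteq> mult_algebra"
    by (simp add: closed_ideals_def)
  show "(\<lambda>J. (\<lambda>S. S (basis_vec 0)) ` J) ` closed_ideals mult_algebra = closed_inv_subspaces (wshift a) K"
    using closed_ideal_image closed_inv_subspace_in_image by blast
qed

end

theorem mainTheorem11:
  fixes a :: "nat \<Rightarrow> complex"
  assumes nz: "\<And>n. a n \<noteq> 0"
    and decr: "\<And>n. cmod (a (Suc n)) \<le> cmod (a n)"
    and sq: "summable (\<lambda>n. (cmod (a n))\<^sup>2)"
  shows "(linear_homeo (\<lambda>S. S (basis_vec 0)) (A_T a) H1 \<and>
         lattice_iso (\<lambda>J. (\<lambda>S. S (basis_vec 0)) ` J)
            (closed_ideals (A_T a)) (closed_inv_subspaces (wshift a) H1)) \<and>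
         (linear_homeo (\<lambda>S. S (basis_vec 0)) (A_T_tilde a) l2 \<and>
         lattice_iso (\<lambda>J. (\<lambda>S. S (basis_vec 0)) ` J)
            (closed_ideals (A_T_tilde a)) (closed_inv_subspaces (wshift a) l2))"
proof -
  interpret shift_weights a
    using nz decr sq by unfold_locales
  interpret H1: shift_model_space a H1
  proof
    show "H1 \<subseteq> l2" by (simp add: H1_eq)
    show "shift_orbit a 1 \<in> H1" using shift_orbit_l2 by (simp add: H1_eq shift_orbit_def)
  qed (rule H1_closed)
  interpret l2: shift_model_space a l2
    by unfold_locales (auto intro: shift_orbit_l2)
  show ?thesis
    using H1.linear_homeo_eval H1.lattice_iso_eval_image l2.linear_homeo_eval l2.lattice_iso_eval_image
    by (simp add: A_T_eq A_T_tilde_eq)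
qed

end
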